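(* Every congruence-splitting lattice has permutable congruences.
   Context: For a lattice $L$ and $x,y\in L$, $\Theta(x,y)$ denotes the least congruence of $L$ identifying $x$ and $y$; $\operatorname{Con}L$ is the lattice of congruences of $L$. A lattice $L$ is congruence-splitting if for all $u\leq v$ in $L$ and all $\alpha,\beta\in\operatorname{Con}L$ with $\Theta(u,v)=\alpha\vee\beta$, there exist $x,y$ in the interval $[u,v]$ with $x\vee y=v$, $u\equiv_\alpha x$ and $u\equiv_\beta y$. A lattice has permutable congruences if $\alpha\beta=\beta\alpha$ for all congruences $\alpha,\beta$, where $\alpha\beta=\{(x,y): \exists z,\ (x,z)\in\alpha,\ (z,y)\in\beta\}$. *)

theory Defs
  imports Main
begin

definition lat_congruence :: "('a::lattice) rel \<Rightarrow> bool" where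
  "lat_congruence \<theta> \<longleftrightarrow> equiv UNIV \<theta> \<and>
     (\<forall>a b c d. (a, b) \<in> \<theta> \<and> (c, d) \<in> \<theta> \<longrightarrow>
        (sup a c, sup b d) \<in> \<theta> \<and> (inf a c, inf b d) \<in> \<theta>)"

definition Con :: "('a::lattice) rel set" where
  "Con = {\<theta>. lat_congruence \<theta>}"

definition Theta :: "'a::lattice \<Rightarrow> 'a \<Rightarrow> 'a rel" where
  "Theta x y = \<Inter>{\<theta>. lat_congruence \<theta> \<and> (x, y) \<in> \<theta>}"

definition con_join :: "('a::lattice) rel \<Rightarrow> 'a rel \<Rightarrow> 'a rel" where
  "con_join \<alpha> \<beta> = \<Inter>{\<theta>. lat_congruence \<theta> \<and> \<alpha> \<union> \<beta> \<subseteq> \<theta>}"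

definition congruence_splitting :: "'a::lattice itself \<Rightarrow> bool" where
  "congruence_splitting TYPE('a) \<longleftrightarrow>
     (\<forall>(u::'a) v \<alpha> \<beta>. u \<le> v \<longrightarrow> \<alpha> \<in> Con \<longrightarrow> \<beta> \<in> Con \<longrightarrow>
        Theta u v = con_join \<alpha> \<beta> \<longrightarrow>
        (\<exists>x y. u \<le> x \<and> x \<le> v \<and> u \<le> y \<and> y \<le> v \<and> sup x y = v \<and>
               (u, x) \<in> \<alpha> \<and> (u, y) \<in> \<beta>))"

definition permutable_congruences :: "'a::lattice itself \<Rightarrow> bool" where
  "permutable_congruences TYPE('a) \<longleftrightarrow>
     (\<forall>\<alpha> \<beta> :: 'a rel. \<alpha> \<in> Con \<longrightarrow> \<beta> \<in> Con \<longrightarrow> \<alpha> O \<beta> = \<beta> O \<alpha>)"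

end

theory Submission
  imports Defs
begin

text \<open>
  Let \<open>a \<alpha> b \<beta> c\<close> and \<open>m = a \<sqinter> c\<close>. The element \<open>(a \<sqinter> b) \<squnion> m\<close> lies in \<open>[m, a]\<close> and is
  \<open>\<beta>\<close>-related to \<open>m\<close> and \<open>\<alpha>\<close>-related to \<open>a\<close>; symmetrically \<open>[m, c]\<close> is crossed by an
  \<open>\<alpha>\<close>-step followed by a \<open>\<beta>\<close>-step. Restricted to such an interval, \<open>\<alpha>\<close> and \<open>\<beta>\<close> join to
  its principal congruence, so splitting yields \<open>a = x\<^sub>1 \<squnion> y\<^sub>1\<close> and \<open>c = x\<^sub>2 \<squnion> y\<^sub>2\<close>
  with \<open>x\<^sub>i \<alpha> m \<beta> y\<^sub>i\<close>. Then \<open>a \<beta> x\<^sub>1 \<squnion> y\<^sub>2 \<alpha> c\<close>, i.e. \<open>\<alpha> O \<beta> \<subseteq> \<beta> O \<alpha>\<close>.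
\<close>

lemma lat_congruence_refl: "lat_congruence \<theta> \<Longrightarrow> (x, x) \<in> \<theta>"
  unfolding lat_congruence_def equiv_def refl_on_def by blast

lemma lat_congruence_sym: "lat_congruence \<theta> \<Longrightarrow> (x, y) \<in> \<theta> \<Longrightarrow> (y, x) \<in> \<theta>"
  unfolding lat_congruence_def equiv_def sym_def by blast

lemma lat_congruence_trans:
  "lat_congruence \<theta> \<Longrightarrow> (x, y) \<in> \<theta> \<Longrightarrow> (y, z) \<in> \<theta> \<Longrightarrow> (x, z) \<in> \<theta>"
  unfolding lat_congruence_def equiv_def trans_def by blast

lemma lat_congruence_sup:
  "lat_congruence \<theta> \<Longrightarrow> (a, b) \<in> \<theta> \<Longrightarrow> (c, d) \<in> \<theta> \<Longrightarrow> (sup a c, sup b d) \<in> \<theta>"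
  unfolding lat_congruence_def by blast

lemma lat_congruence_inf:
  "lat_congruence \<theta> \<Longrightarrow> (a, b) \<in> \<theta> \<Longrightarrow> (c, d) \<in> \<theta> \<Longrightarrow> (inf a c, inf b d) \<in> \<theta>"
  unfolding lat_congruence_def by blast

lemma lat_congruence_Inter:
  assumes "\<And>\<theta>. \<theta> \<in> S \<Longrightarrow> lat_congruence (\<theta> :: 'a::lattice rel)"
  shows "lat_congruence (\<Inter>S)"
  using assms unfolding lat_congruence_def[of "\<Inter>S"] equiv_def refl_on_def sym_def trans_def
  by (auto intro: lat_congruence_refl lat_congruence_sup lat_congruence_inf lat_congruence_trans
      dest: lat_congruence_sym)

lemma lat_congruence_Int:
  "lat_congruence \<alpha> \<Longrightarrow> lat_congruence \<beta> \<Longrightarrow> lat_congruence (\<alpha> \<inter> \<beta>)"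
  using lat_congruence_Inter[of "{\<alpha>, \<beta>}"] by auto

lemma lat_congruence_Theta: "lat_congruence (Theta u v)"
  unfolding Theta_def by (rule lat_congruence_Inter) blast

lemma Theta_mem: "(u, v) \<in> Theta u v"
  unfolding Theta_def by blast

lemma Theta_least: "lat_congruence \<theta> \<Longrightarrow> (u, v) \<in> \<theta> \<Longrightarrow> Theta u v \<subseteq> \<theta>"
  unfolding Theta_def by blast

lemma lat_congruence_con_join: "lat_congruence (con_join \<alpha> \<beta>)"
  unfolding con_join_def by (rule lat_congruence_Inter) blast

lemma con_join_upper: "\<alpha> \<union> \<beta> \<subseteq> con_join \<alpha> \<beta>"
  unfolding con_join_def by blast

lemma con_join_least: "lat_congruence \<theta> \<Longrightarrow> \<alpha> \<union> \<beta> \<subseteq> \<theta> \<Longrightarrow> con_join \<alpha> \<beta> \<subseteq> \<theta>"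
  unfolding con_join_def by blast

lemma lat_congruence_interval:
  assumes \<theta>: "lat_congruence \<theta>" and "(u, v) \<in> \<theta>" and "u \<le> z" "z \<le> v"
  shows "(u, z) \<in> \<theta>" and "(z, v) \<in> \<theta>"
proof -
  have "(inf z u, inf z v) \<in> \<theta>" "(sup z u, sup z v) \<in> \<theta>"
    using assms by (auto intro: lat_congruence_inf lat_congruence_sup lat_congruence_refl)
  with \<open>u \<le> z\<close> \<open>z \<le> v\<close> show "(u, z) \<in> \<theta>" "(z, v) \<in> \<theta>"
    by (simp_all add: inf_absorb1 inf_absorb2 sup_absorb1 sup_absorb2)
qed

lemma lat_congruence_sup_absorb:
  assumes "lat_congruence \<theta>" and "(m, y) \<in> \<theta>" and "m \<le> x"
  shows "(sup x y, x) \<in> \<theta>"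
proof -
  have "(sup x y, sup x m) \<in> \<theta>"
    using assms by (auto intro: lat_congruence_sup lat_congruence_refl lat_congruence_sym)
  with \<open>m \<le> x\<close> show ?thesis by (simp add: sup_absorb1)
qed

text \<open>
  Every pair in \<open>[u, v]\<close> is \<open>Theta u v\<close>-related, so the two steps survive restricting
  \<open>\<alpha>\<close> and \<open>\<beta>\<close> to \<open>Theta u v\<close>, and the restrictions then join to \<open>Theta u v\<close>.
\<close>
lemma congruence_splitting_two_steps:
  fixes u z v :: "'a::lattice"
  assumes splitting: "congruence_splitting TYPE('a)"
    and \<alpha>: "lat_congruence \<alpha>" and \<beta>: "lat_congruence \<beta>"
    and "u \<le> z" "z \<le> v"
    and uz: "(u, z) \<in> \<alpha> \<union> \<beta>" and zv: "(z, v) \<in> \<alpha> \<union> \<beta>"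
  obtains x y where "u \<le> x" "u \<le> y" "sup x y = v" "(u, x) \<in> \<alpha>" "(u, y) \<in> \<beta>"
proof -
  let ?\<Theta> = "Theta u v"
  have \<Theta>: "lat_congruence ?\<Theta>"
    by (rule lat_congruence_Theta)
  have u_z: "(u, z) \<in> ?\<Theta>" and z_v: "(z, v) \<in> ?\<Theta>"
    using lat_congruence_interval[OF \<Theta> Theta_mem \<open>u \<le> z\<close> \<open>z \<le> v\<close>] by auto
  let ?J = "con_join (\<alpha> \<inter> ?\<Theta>) (\<beta> \<inter> ?\<Theta>)"
  have J: "lat_congruence ?J"
    by (rule lat_congruence_con_join)
  have "(u, z) \<in> ?J" "(z, v) \<in> ?J"
    using uz zv u_z z_v con_join_upper[of "\<alpha> \<inter> ?\<Theta>" "\<beta> \<inter> ?\<Theta>"] by auto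
  then have "?\<Theta> \<subseteq> ?J"
    by (meson J Theta_least lat_congruence_trans)
  moreover have "?J \<subseteq> ?\<Theta>"
    by (rule con_join_least[OF \<Theta>]) blast
  ultimately have "?\<Theta> = ?J" by blast
  moreover have "\<alpha> \<inter> ?\<Theta> \<in> Con" "\<beta> \<inter> ?\<Theta> \<in> Con"
    using \<alpha> \<beta> \<Theta> by (simp_all add: Con_def lat_congruence_Int)
  moreover have "u \<le> v" using \<open>u \<le> z\<close> \<open>z \<le> v\<close> by simp
  ultimately show ?thesis
    using splitting that unfolding congruence_splitting_def by blast
qed

lemma relcomp_interval_chain:
  assumes \<alpha>: "lat_congruence \<alpha>" and \<beta>: "lat_congruence \<beta>"
    and ab: "(a, b) \<in> \<alpha>" and bc: "(b, c) \<in> \<beta>"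
  defines "z \<equiv> sup (inf a b) (inf a c)"
  shows "inf a c \<le> z" "z \<le> a" "(inf a c, z) \<in> \<beta>" "(z, a) \<in> \<alpha>"
proof -
  show "inf a c \<le> z" "z \<le> a"
    unfolding z_def by auto
  have "(inf a c, inf a b) \<in> \<beta>"
    by (rule lat_congruence_inf[OF \<beta> lat_congruence_refl[OF \<beta>] lat_congruence_sym[OF \<beta> bc]])
  from lat_congruence_sup[OF \<beta> this lat_congruence_refl[OF \<beta>, of "inf a c"]]
  show "(inf a c, z) \<in> \<beta>" by (simp add: z_def)
  have "(inf a b, inf a a) \<in> \<alpha>"
    by (rule lat_congruence_inf[OF \<alpha> lat_congruence_refl[OF \<alpha>] lat_congruence_sym[OF \<alpha> ab]])
  from lat_congruence_sup[OF \<alpha> this lat_congruence_refl[OF \<alpha>, of "inf a c"]]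
  show "(z, a) \<in> \<alpha>" by (simp add: z_def)
qed

lemma congruence_splitting_relcomp_subset:
  fixes \<alpha> \<beta> :: "'a::lattice rel"
  assumes splitting: "congruence_splitting TYPE('a)"
    and \<alpha>: "lat_congruence \<alpha>" and \<beta>: "lat_congruence \<beta>"
  shows "\<alpha> O \<beta> \<subseteq> \<beta> O \<alpha>"
proof
  fix p assume "p \<in> \<alpha> O \<beta>"
  then obtain a b c where p: "p = (a, c)" and ab: "(a, b) \<in> \<alpha>" and bc: "(b, c) \<in> \<beta>"
    by blast
  define m where "m = inf a c"
  note chain\<^sub>1 = relcomp_interval_chain[OF \<alpha> \<beta> ab bc, folded m_def]
  obtain x\<^sub>1 y\<^sub>1 where "m \<le> x\<^sub>1" and a: "sup x\<^sub>1 y\<^sub>1 = a" and x\<^sub>1: "(m, x\<^sub>1) \<in> \<alpha>" and y\<^sub>1: "(m, y\<^sub>1) \<in> \<beta>"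
    using congruence_splitting_two_steps[OF splitting \<alpha> \<beta> chain\<^sub>1(1,2)] chain\<^sub>1(3,4) by blast
  have cb: "(c, b) \<in> \<beta>" and ba: "(b, a) \<in> \<alpha>"
    using ab bc \<alpha> \<beta> by (auto intro: lat_congruence_sym)
  note chain\<^sub>2 = relcomp_interval_chain[OF \<beta> \<alpha> cb ba, unfolded inf_commute[of c a], folded m_def]
  obtain x\<^sub>2 y\<^sub>2 where "m \<le> y\<^sub>2" and c: "sup x\<^sub>2 y\<^sub>2 = c" and x\<^sub>2: "(m, x\<^sub>2) \<in> \<alpha>" and y\<^sub>2: "(m, y\<^sub>2) \<in> \<beta>"
    using congruence_splitting_two_steps[OF splitting \<alpha> \<beta> chain\<^sub>2(1,2)] chain\<^sub>2(3,4) by blast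
  have "(a, x\<^sub>1) \<in> \<beta>" "(sup x\<^sub>1 y\<^sub>2, x\<^sub>1) \<in> \<beta>"
    using a \<open>m \<le> x\<^sub>1\<close> y\<^sub>1 y\<^sub>2 lat_congruence_sup_absorb[OF \<beta>] by auto
  then have "(a, sup x\<^sub>1 y\<^sub>2) \<in> \<beta>"
    by (meson \<beta> lat_congruence_sym lat_congruence_trans)
  moreover have "(c, y\<^sub>2) \<in> \<alpha>" "(sup x\<^sub>1 y\<^sub>2, y\<^sub>2) \<in> \<alpha>"
    using c \<open>m \<le> y\<^sub>2\<close> x\<^sub>1 x\<^sub>2 lat_congruence_sup_absorb[OF \<alpha>] by (auto simp: sup_commute)
  then have "(sup x\<^sub>1 y\<^sub>2, c) \<in> \<alpha>"
    by (meson \<alpha> lat_congruence_sym lat_congruence_trans)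
  ultimately show "p \<in> \<beta> O \<alpha>"
    using p by blast
qed

theorem theorem1p2:
  assumes "congruence_splitting TYPE('a::lattice)"
  shows "permutable_congruences TYPE('a)"
  unfolding permutable_congruences_def Con_def
  using congruence_splitting_relcomp_subset[OF assms] by blast

end
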